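(* Let $\phi(x)=\psi_0(\psi_1(x),\dots,\psi_n(x))$ where $\psi_0(y_1,\dots,y_n)$ is an IPC formula in which each $y_i$ is negative, and each $\psi_i$ ($1\le i\le n$) is an IPC formula in which $x$ is negative (all formulas may contain further parameter variables). Let $H$ be a Heyting algebra and $v$ a valuation of the parameters in $H$; write $\psi_j$ also for the induced functions. Then the monotone map $G:H^n\to H^n$, $G(\vec y)=(\psi_1(\psi_0(\vec y)),\dots,\psi_n(\psi_0(\vec y)))$, has a greatest fixed point $(\nu_1,\dots,\nu_n)$ (coordinatewise order), the map $F(h)=[\![\phi]\!]_{(v,h/x)}$ has a least fixed point, and $\mu.F=\psi_0(\nu_1,\dots,\nu_n)$.
   Context: An occurrence of a variable is negative in a formula if the path in the syntax tree from the root to it passes through an odd number of nodes labelled by an implication $\chi_1\to\chi_2$ whose successor on the path is $\chi_1$; a variable is negative in a formula if all its occurrences are negative. *)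

theory Defs
  imports Main
begin

class heyting_algebra = bounded_lattice +
  fixes himp :: "'a \<Rightarrow> 'a \<Rightarrow> 'a"  (infixr \<open>\<leadsto>\<close> 25)
  assumes himp_residuation: "inf x y \<le> z \<longleftrightarrow> x \<le> (y \<leadsto> z)"

datatype 'v fm =
    Var 'v
  | Bot
  | Top
  | Conj "'v fm" "'v fm"
  | Disj "'v fm" "'v fm"
  | Imp "'v fm" "'v fm"

text \<open>Negation is the abbreviation Imp phi Bot.\<close>

fun vars :: "'v fm \<Rightarrow> 'v set" where
  "vars (Var w) = {w}"
| "vars Bot = {}"
| "vars Top = {}"
| "vars (Conj a b) = vars a \<union> vars b"
| "vars (Disj a b) = vars a \<union> vars b"
| "vars (Imp a b) = vars a \<union> vars b"

text \<open>occ p x phi: x has an occurrence in phi whose polarity is p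
  (True = positive, i.e. an even number of left-of-implication steps
  on the path from the root; False = negative, odd number).\<close>

fun occ :: "bool \<Rightarrow> 'v \<Rightarrow> 'v fm \<Rightarrow> bool" where
  "occ p x (Var w) = (p \<and> x = w)"
| "occ p x Bot = False"
| "occ p x Top = False"
| "occ p x (Conj a b) = (occ p x a \<or> occ p x b)"
| "occ p x (Disj a b) = (occ p x a \<or> occ p x b)"
| "occ p x (Imp a b) = (occ (\<not> p) x a \<or> occ p x b)"

definition negative_in :: "'v \<Rightarrow> 'v fm \<Rightarrow> bool" where
  "negative_in x phi \<longleftrightarrow> \<not> occ True x phi"

fun eval :: "('v \<Rightarrow> 'a::heyting_algebra) \<Rightarrow> 'v fm \<Rightarrow> 'a" where
  "eval v (Var w) = v w"
| "eval v Bot = bot"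
| "eval v Top = top"
| "eval v (Conj a b) = inf (eval v a) (eval v b)"
| "eval v (Disj a b) = sup (eval v a) (eval v b)"
| "eval v (Imp a b) = (eval v a \<leadsto> eval v b)"

fun subst :: "('v \<Rightarrow> 'v fm) \<Rightarrow> 'v fm \<Rightarrow> 'v fm" where
  "subst s (Var w) = s w"
| "subst s Bot = Bot"
| "subst s Top = Top"
| "subst s (Conj a b) = Conj (subst s a) (subst s b)"
| "subst s (Disj a b) = Disj (subst s a) (subst s b)"
| "subst s (Imp a b) = Imp (subst s a) (subst s b)"

text \<open>Composite formula psi0(psi_1,...,psi_n): replace y i by psi i for i in {1..n}.\<close>

definition compose_fm :: "'v fm \<Rightarrow> nat \<Rightarrow> (nat \<Rightarrow> 'v) \<Rightarrow> (nat \<Rightarrow> 'v fm) \<Rightarrow> 'v fm" where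
  "compose_fm psi0 n y psi =
     subst (\<lambda>w. if w \<in> y ` {1..n} then psi (the_inv_into {1..n} y w) else Var w) psi0"

definition assign :: "('v \<Rightarrow> 'a) \<Rightarrow> nat \<Rightarrow> (nat \<Rightarrow> 'v) \<Rightarrow> (nat \<Rightarrow> 'a) \<Rightarrow> 'v \<Rightarrow> 'a" where
  "assign v n y h = (\<lambda>w. if w \<in> y ` {1..n} then h (the_inv_into {1..n} y w) else v w)"

text \<open>Vectors in H^n are represented as functions nat => H; only coordinates 1..n matter.\<close>

definition vec_le :: "nat \<Rightarrow> (nat \<Rightarrow> 'a::order) \<Rightarrow> (nat \<Rightarrow> 'a) \<Rightarrow> bool" where
  "vec_le n a b \<longleftrightarrow> (\<forall>i\<in>{1..n}. a i \<le> b i)"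

definition vec_eq :: "nat \<Rightarrow> (nat \<Rightarrow> 'a) \<Rightarrow> (nat \<Rightarrow> 'a) \<Rightarrow> bool" where
  "vec_eq n a b \<longleftrightarrow> (\<forall>i\<in>{1..n}. a i = b i)"

end

theory Submission
  imports Defs
begin

text \<open>Formula-definable maps on a Heyting algebra are internally monotone (antitone in
  negative variables): if \<open>d \<sqinter> a' \<le> a\<close> then \<open>d \<sqinter> t(a) \<le> t(a')\<close>. Write \<open>G = P \<circ> P0\<close> and
  \<open>F = P0 \<circ> P\<close> with \<open>P0\<close> induced by \<open>\<psi>\<^sub>0\<close> and \<open>P\<close> by the \<open>\<psi>\<^sub>i\<close>, and let \<open>u\<^sub>k = G\<^sup>k(\<top>)\<close>,
  \<open>c\<^sub>k = P0(u\<^sub>k)\<close>. Applying internal antitonicity of \<open>P\<close> with \<open>d = c\<^sub>k\<^sub>+\<^sub>1 \<leadsto> c\<^sub>k\<close> and of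
  \<open>P0\<close> in turn shows: if \<open>e \<le> u\<^sub>k\<^sub>+\<^sub>1(j)\<close> for at least \<open>n - k\<close> coordinates \<open>j\<close>, then
  \<open>e \<sqinter> u\<^sub>k \<le> u\<^sub>k\<^sub>+\<^sub>1\<close>. For \<open>k = n\<close> the condition is vacuous, so the decreasing chain \<open>u\<^sub>k\<close>
  is stationary from \<open>n\<close> on and \<open>u\<^sub>n\<close> is the greatest fixed point of \<open>G\<close>; since \<open>F\<close> and
  \<open>G\<close> are the two rotations of the same composite, \<open>P0(u\<^sub>n)\<close> is the least fixed point of \<open>F\<close>.\<close>

context heyting_algebra
begin

lemma himp_mp: "inf (a \<leadsto> b) a \<le> b"
  using himp_residuation[of "a \<leadsto> b" a b] by simp

lemma inf_sup_distrib_le: "inf x (sup y z) \<le> sup (inf x y) (inf x z)"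
proof -
  have "inf y x \<le> sup (inf x y) (inf x z)" "inf z x \<le> sup (inf x y) (inf x z)"
    by (simp_all add: inf_commute le_supI1 le_supI2)
  then have "sup y z \<le> (x \<leadsto> sup (inf x y) (inf x z))"
    by (simp add: himp_residuation)
  then show ?thesis
    by (simp add: inf_commute flip: himp_residuation)
qed

subclass distrib_lattice
proof
  fix x y z :: 'a
  have "inf x (sup y z) = sup (inf x y) (inf x z)" for x y z
    by (rule order.antisym[OF inf_sup_distrib_le distrib_inf_le])
  then show "sup x (inf y z) = inf (sup x y) (sup x z)"
    by (rule distrib_imp1)
qed

end

lemma eval_strength:
  fixes d :: "'a::heyting_algebra"
  assumes "\<And>w. occ True w phi \<Longrightarrow> inf d (v w) \<le> v' w"
    and "\<And>w. occ False w phi \<Longrightarrow> inf d (v' w) \<le> v w"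
  shows "inf d (eval v phi) \<le> eval v' phi"
  using assms
proof (induction phi arbitrary: v v')
  case (Conj a b)
  have "inf d (eval v a) \<le> eval v' a" "inf d (eval v b) \<le> eval v' b"
    using Conj by auto
  then show ?case
    by (auto intro: order_trans[OF inf_mono[OF order_refl inf_le1]]
        order_trans[OF inf_mono[OF order_refl inf_le2]])
next
  case (Disj a b)
  have "inf d (eval v a) \<le> eval v' a" "inf d (eval v b) \<le> eval v' b"
    using Disj by auto
  then show ?case
    by (simp add: inf_sup_distrib1 le_supI1 le_supI2)
next
  case (Imp a b)
  have a: "inf d (eval v' a) \<le> eval v a" and b: "inf d (eval v b) \<le> eval v' b"
    using Imp by auto
  have "inf (inf d (eval v a \<leadsto> eval v b)) (eval v' a) \<le> inf d (inf (eval v a \<leadsto> eval v b) (eval v a))"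
    using order_trans[OF inf_mono[OF inf_le1 order_refl] a] by (simp add: le_infI1)
  also have "\<dots> \<le> inf d (eval v b)"
    using himp_mp by (rule inf_mono[OF order_refl])
  also have "\<dots> \<le> eval v' b"
    by (rule b)
  finally show ?case
    by (simp add: himp_residuation)
qed auto

lemma eval_cong: "(\<And>w. w \<in> vars phi \<Longrightarrow> v w = v' w) \<Longrightarrow> eval v phi = eval v' phi"
  by (induction phi) auto

lemma eval_subst: "eval v (subst s phi) = eval (\<lambda>w. eval v (s w)) phi"
  by (induction phi) auto

lemma eval_compose_fm:
  "eval v (compose_fm psi0 n y psi) = eval (assign v n y (\<lambda>i. eval v (psi i))) psi0"
  unfolding compose_fm_def assign_def eval_subst by (rule eval_cong) auto

lemma eval_upd_strength:
  fixes d :: "'a::heyting_algebra"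
  assumes "negative_in x phi" and "inf d a' \<le> a"
  shows "inf d (eval (v(x := a)) phi) \<le> eval (v(x := a')) phi"
  using assms unfolding negative_in_def
  by (intro eval_strength) (auto simp: fun_upd_def)

lemma eval_assign_strength:
  fixes d :: "'a::heyting_algebra"
  assumes "inj_on y {1..n}" and "\<And>i. i \<in> {1..n} \<Longrightarrow> negative_in (y i) phi"
    and "\<And>i. i \<in> {1..n} \<Longrightarrow> inf d (h' i) \<le> h i"
  shows "inf d (eval (assign v n y h) phi) \<le> eval (assign v n y h') phi"
proof (rule eval_strength)
  fix w
  show "inf d (assign v n y h w) \<le> assign v n y h' w" if "occ True w phi"
    using that assms(2) by (auto simp: assign_def negative_in_def)
  show "inf d (assign v n y h' w) \<le> assign v n y h w" if "occ False w phi"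
    using assms(1,3) by (auto simp: assign_def the_inv_into_f_f)
qed

locale internally_antitone_pair =
  fixes n :: nat
    and P0 :: "(nat \<Rightarrow> 'a::heyting_algebra) \<Rightarrow> 'a"
    and P :: "'a \<Rightarrow> nat \<Rightarrow> 'a"
  assumes P0_strength: "(\<And>i. i \<in> {1..n} \<Longrightarrow> inf d (h' i) \<le> h i) \<Longrightarrow> inf d (P0 h) \<le> P0 h'"
    and P_strength: "i \<in> {1..n} \<Longrightarrow> inf d a' \<le> a \<Longrightarrow> inf d (P a i) \<le> P a' i"
begin

definition step :: "(nat \<Rightarrow> 'a) \<Rightarrow> nat \<Rightarrow> 'a" where
  "step h = P (P0 h)"

definition iter :: "nat \<Rightarrow> nat \<Rightarrow> 'a" where
  "iter k = (step ^^ k) (\<lambda>_. top)"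

lemma iter_0: "iter 0 = (\<lambda>_. top)"
  by (simp add: iter_def)

lemma iter_Suc: "iter (Suc k) = P (P0 (iter k))"
  by (simp add: iter_def step_def)

lemma P0_antitone: "vec_le n h h' \<Longrightarrow> P0 h' \<le> P0 h"
  using P0_strength[of top h h'] by (simp add: vec_le_def)

lemma P0_cong: "vec_eq n h h' \<Longrightarrow> P0 h = P0 h'"
  by (intro order.antisym P0_antitone) (simp_all add: vec_eq_def vec_le_def)

lemma P_antitone: "i \<in> {1..n} \<Longrightarrow> a \<le> a' \<Longrightarrow> P a' i \<le> P a i"
  using P_strength[of i top a a'] by simp

lemma P_himp: "i \<in> {1..n} \<Longrightarrow> inf (a' \<leadsto> a) (P a i) \<le> P a' i"
  using P_strength[of i "a' \<leadsto> a" a' a] by (simp add: himp_mp)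

lemma step_mono: "vec_le n h h' \<Longrightarrow> vec_le n (step h) (step h')"
  by (simp add: step_def vec_le_def P_antitone P0_antitone)

lemma iter_Suc_le: "vec_le n (iter (Suc k)) (iter k)"
proof (induction k)
  case 0
  show ?case by (simp add: vec_le_def iter_0)
next
  case (Suc k)
  then show ?case
    using step_mono by (simp add: iter_def)
qed

lemma le_iter_if_fixed: "vec_eq n (step h) h \<Longrightarrow> vec_le n h (iter k)"
proof (induction k)
  case 0
  show ?case by (simp add: vec_le_def iter_0)
next
  case (Suc k)
  then have "vec_le n (step h) (step (iter k))"
    by (simp add: step_mono)
  with Suc.prems show ?case
    by (simp add: iter_def vec_le_def vec_eq_def)
qed

lemma inf_iter_le_iter_Suc:
  assumes "n \<le> card {j \<in> {1..n}. e \<le> iter (Suc k) j} + k" and "i \<in> {1..n}"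
  shows "inf e (iter k i) \<le> iter (Suc k) i"
  using assms
proof (induction k arbitrary: e i)
  case 0
  then have "{j \<in> {1..n}. e \<le> iter (Suc 0) j} = {1..n}"
    by (intro card_seteq) auto
  with 0 show ?case
    by (auto intro: le_infI1)
next
  case (Suc m)
  show ?case
  proof (cases "e \<le> iter (Suc (Suc m)) i")
    case True
    then show ?thesis by (simp add: le_infI1)
  next
    case False
    define e' where "e' = inf e (iter (Suc m) i)"
    \<comment> \<open>\<open>i\<close> is one more coordinate below which \<open>e'\<close> lies, so the hypothesis holds one level down.\<close>
    have "e' \<le> iter (Suc m) j" if "j \<in> {1..n}" and "e \<le> iter (Suc (Suc m)) j" for j
    proof -
      have "iter (Suc (Suc m)) j \<le> iter (Suc m) j"
        using iter_Suc_le[of "Suc m"] that(1) by (simp add: vec_le_def)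
      with that(2) have "e \<le> iter (Suc m) j"
        by (rule order_trans)
      then show ?thesis
        by (simp add: e'_def le_infI1)
    qed
    moreover have "e' \<le> iter (Suc m) i"
      by (simp add: e'_def)
    ultimately have "insert i {j \<in> {1..n}. e \<le> iter (Suc (Suc m)) j} \<subseteq> {j \<in> {1..n}. e' \<le> iter (Suc m) j}"
      using Suc.prems(2) by blast
    then have "card (insert i {j \<in> {1..n}. e \<le> iter (Suc (Suc m)) j})
        \<le> card {j \<in> {1..n}. e' \<le> iter (Suc m) j}"
      by (intro card_mono) simp_all
    with False have "card {j \<in> {1..n}. e \<le> iter (Suc (Suc m)) j} + 1
        \<le> card {j \<in> {1..n}. e' \<le> iter (Suc m) j}"
      by simp
    then have "n \<le> card {j \<in> {1..n}. e' \<le> iter (Suc m) j} + m"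
      using Suc.prems(1) by simp
    then have "inf e' (P0 (iter (Suc m))) \<le> P0 (iter m)"
      by (intro P0_strength Suc.IH)
    then have "e' \<le> inf (P0 (iter (Suc m)) \<leadsto> P0 (iter m)) (P (P0 (iter m)) i)"
      by (simp add: himp_residuation e'_def iter_Suc)
    also have "\<dots> \<le> P (P0 (iter (Suc m))) i"
      using Suc.prems(2) by (rule P_himp)
    finally show ?thesis
      by (simp add: e'_def iter_Suc)
  qed
qed

lemma iter_fixed: "vec_eq n (step (iter n)) (iter n)"
proof -
  have "iter (Suc n) i = iter n i" if "i \<in> {1..n}" for i
  proof (rule order.antisym)
    show "iter (Suc n) i \<le> iter n i"
      using iter_Suc_le[of n] that by (simp add: vec_le_def)
    show "iter n i \<le> iter (Suc n) i"
      using inf_iter_le_iter_Suc[of top n i] that by simp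
  qed
  then show ?thesis
    by (simp add: vec_eq_def iter_def)
qed

lemma P0_iter_fixed: "P0 (P (P0 (iter n))) = P0 (iter n)"
  using P0_cong[OF iter_fixed] by (simp add: step_def)

lemma P0_iter_least: "P0 (P a) = a \<Longrightarrow> P0 (iter n) \<le> a"
  using le_iter_if_fixed[of "P a" n] P0_antitone[of "P a" "iter n"]
  by (simp add: step_def vec_eq_def)

end

lemma eval_compose_fm_upd:
  "x \<notin> vars psi0 \<Longrightarrow> eval (v(x := a)) (compose_fm psi0 n y psi)
     = eval (assign v n y (\<lambda>i. eval (v(x := a)) (psi i))) psi0"
  unfolding eval_compose_fm by (rule eval_cong) (auto simp: assign_def)

theorem mainTheorem16:
  fixes psi0 :: "'v fm" and psi :: "nat \<Rightarrow> 'v fm" and n :: nat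
    and x :: 'v and y :: "nat \<Rightarrow> 'v" and v :: "'v \<Rightarrow> 'a::heyting_algebra"
  assumes y_inj: "inj_on y {1..n}"
    and x_not_y: "x \<notin> y ` {1..n}"
    and x_not_in_psi0: "x \<notin> vars psi0"
    and y_not_in_psi: "\<And>i j. i \<in> {1..n} \<Longrightarrow> j \<in> {1..n} \<Longrightarrow> y j \<notin> vars (psi i)"
    and y_neg: "\<And>i. i \<in> {1..n} \<Longrightarrow> negative_in (y i) psi0"
    and x_neg: "\<And>i. i \<in> {1..n} \<Longrightarrow> negative_in x (psi i)"
  defines "G \<equiv> (\<lambda>h i. eval (v(x := eval (assign v n y h) psi0)) (psi i))"
    and "F \<equiv> (\<lambda>a. eval (v(x := a)) (compose_fm psi0 n y psi))"
  shows "(\<forall>a b. vec_le n a b \<longrightarrow> vec_le n (G a) (G b))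
    \<and> (\<exists>\<nu>. vec_eq n (G \<nu>) \<nu>
          \<and> (\<forall>\<mu>. vec_eq n (G \<mu>) \<mu> \<longrightarrow> vec_le n \<mu> \<nu>)
          \<and> F (eval (assign v n y \<nu>) psi0) = eval (assign v n y \<nu>) psi0
          \<and> (\<forall>a. F a = a \<longrightarrow> eval (assign v n y \<nu>) psi0 \<le> a))"
proof -
  interpret internally_antitone_pair n "\<lambda>h. eval (assign v n y h) psi0" "\<lambda>a i. eval (v(x := a)) (psi i)"
    by unfold_locales (blast intro: eval_assign_strength[OF y_inj y_neg] eval_upd_strength x_neg)+
  have "G = step"
    by (simp add: G_def step_def fun_eq_iff)
  moreover have "F a = eval (assign v n y (\<lambda>i. eval (v(x := a)) (psi i))) psi0" for a
    using x_not_in_psi0 by (simp add: F_def eval_compose_fm_upd)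
  ultimately show ?thesis
    using step_mono iter_fixed le_iter_if_fixed P0_iter_fixed P0_iter_least by auto
qed

end
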